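(* Let $v_{max}\in\mathbb{N}$, $V=\{1,\ldots,v_{max}\}$, $b>0$ and $K>0$. Let $f_{mort}:V\to(0,1)$ be any function, and let $f_{mut}:\{-v_{max},\ldots,0,\ldots,v_{max}\}\to[0,1]$ satisfy: $f_{mut}(-u)=f_{mut}(u)$ for all $u$; $u\mapsto f_{mut}(u)$ is decreasing for $u\geq 0$; and $\sum_{u=-v_{max}}^{v_{max}} f_{mut}(u)=1$. Let $P_0:V\to[0,\infty)$ and define $P_n:V\to[0,\infty)$ recursively by $$P_{n+1}(v)=(1-f_{mort}(v))P_n(v)+b\,(P_n\star f_{mut})(v)\left(1-\frac{\|P_n\|_1}{K}\right)\mathbf{1}_{[0,K]}(\|P_n\|_1),\qquad v=1,\ldots,v_{max},$$ where $(P_n\star f_{mut})(v)=\sum_{u=1}^{v_{max}}P_n(u)f_{mut}(v-u)$, $\|P_n\|_1=\sum_{v=1}^{v_{max}}P_n(v)$, and $\mathbf{1}_{[0,K]}$ is the indicator function of $[0,K]$. Define $F_{mut}(u)=\sum_{v=1}^{v_{max}}f_{mut}(v-u)$ for $u=1,\ldots,v_{max}$. If $$\|1-f_{mort}\|_\infty+b\|F_{mut}\|_\infty\leq 1,$$ where $\|1-f_{mort}\|_\infty=\max_{v\in V}(1-f_{mort}(v))$ and $\|F_{mut}\|_\infty=\max_u F_{mut}(u)$, then $\lim_{n\to\infty}\|P_n\|_1=0$.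
   Context: This is a discrete population model (a Verhulst-type model with a trait): $P_n(v)$ is the number of individuals in generation $n$ with trait value $v$, $b$ is the birth rate, $K$ the environmental capacity, $f_{mort}$ the trait-dependent mortality rate and $f_{mut}$ the mutation distribution. *)

theory Defs
  imports "HOL-Analysis.Analysis"
begin

definition l1norm :: "nat \<Rightarrow> (nat \<Rightarrow> real) \<Rightarrow> real" where
  "l1norm vmax P = (\<Sum>v=1..vmax. P v)"

definition conv_mut :: "nat \<Rightarrow> (nat \<Rightarrow> real) \<Rightarrow> (int \<Rightarrow> real) \<Rightarrow> nat \<Rightarrow> real" where
  "conv_mut vmax P fmut v = (\<Sum>u=1..vmax. P u * fmut (int v - int u))"

definition indic_0K :: "real \<Rightarrow> real \<Rightarrow> real" where
  "indic_0K K x = (if 0 \<le> x \<and> x \<le> K then 1 else 0)"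

primrec pop :: "nat \<Rightarrow> real \<Rightarrow> real \<Rightarrow> (nat \<Rightarrow> real) \<Rightarrow> (int \<Rightarrow> real)
    \<Rightarrow> (nat \<Rightarrow> real) \<Rightarrow> nat \<Rightarrow> nat \<Rightarrow> real" where
  "pop vmax b K fmort fmut P0 0 = P0"
| "pop vmax b K fmort fmut P0 (Suc n) =
     (\<lambda>v. (1 - fmort v) * pop vmax b K fmort fmut P0 n v
          + b * conv_mut vmax (pop vmax b K fmort fmut P0 n) fmut v
              * (1 - l1norm vmax (pop vmax b K fmort fmut P0 n) / K)
              * indic_0K K (l1norm vmax (pop vmax b K fmort fmut P0 n)))"

definition Fmut :: "nat \<Rightarrow> (int \<Rightarrow> real) \<Rightarrow> nat \<Rightarrow> real" where
  "Fmut vmax fmut u = (\<Sum>v=1..vmax. fmut (int v - int u))"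

end

theory Submission
  imports Defs
begin

text \<open>
  Let \<open>N n\<close> be the total population, \<open>m\<close> the maximum of \<open>1 - f\<^sub>m\<^sub>o\<^sub>r\<^sub>t\<close> and \<open>F\<close> that
  of \<open>F\<^sub>m\<^sub>u\<^sub>t\<close>. Summing the recursion over all traits and exchanging the order of summation
  in the convolution gives \<open>N (n+1) \<le> m N n + b F N n (1 - N n / K)\<close> while \<open>N n \<le> K\<close>,
  which by \<open>m + b F \<le> 1\<close> is at most \<open>N n - (b F / K) (N n)\<^sup>2\<close>; and \<open>N (n+1) \<le> m N n\<close>
  once \<open>N n > K\<close>, where the indicator switches births off. Since \<open>m < 1\<close>, and \<open>F > 0\<close>
  because \<open>f\<^sub>m\<^sub>u\<^sub>t\<close> is maximal at \<open>0\<close> and sums to \<open>1\<close>, the decrease of \<open>N\<close> is bounded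
  away from zero as long as \<open>N\<close> is, so \<open>N\<close> tends to zero.
\<close>

lemma tendsto_zero_if_decrement:
  fixes N :: "nat \<Rightarrow> real" and d :: "real \<Rightarrow> real"
  assumes N_nonneg: "\<And>n. 0 \<le> N n"
    and N_Suc: "\<And>n. N (Suc n) \<le> N n - d (N n)"
    and d_mono: "mono_on {0..} d" and d_pos: "\<And>x. 0 < x \<Longrightarrow> 0 < d x" and d_0: "0 \<le> d 0"
  shows "N \<longlonglongrightarrow> 0"
proof -
  have d_nonneg: "0 \<le> d x" if "0 \<le> x" for x
    using d_0 mono_onD[OF d_mono, of 0 x] that by auto
  have "N (Suc n) \<le> N n" for n
    using N_Suc[of n] d_nonneg[OF N_nonneg[of n]] by linarith
  then have "decseq N"
    by (rule decseq_SucI)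
  then obtain L where L: "N \<longlonglongrightarrow> L" "\<And>n. L \<le> N n"
    using decseq_convergent[of N 0] N_nonneg by metis
  have "0 \<le> L"
    using LIMSEQ_le_const[OF L(1)] N_nonneg by blast
  moreover have "\<not> 0 < L"
  proof
    assume "0 < L"
    have "N (Suc n) \<le> N n - d L" for n
      using N_Suc[of n] mono_onD[OF d_mono, of L "N n"] \<open>0 < L\<close> L(2)[of n] by auto
    then have "L \<le> L - d L"
      by (intro LIMSEQ_le[OF LIMSEQ_Suc[OF L(1)] tendsto_diff[OF L(1) tendsto_const]]) auto
    with d_pos[OF \<open>0 < L\<close>] show False by simp
  qed
  ultimately show ?thesis
    using L(1) by simp
qed

lemma tendsto_zero_if_quadratic_or_linear_decrement:
  fixes N :: "nat \<Rightarrow> real" and a c :: real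
  assumes "\<And>n. 0 \<le> N n" and "\<And>n. N (Suc n) \<le> N n - min (a * (N n)\<^sup>2) (c * N n)"
    and "0 < a" and "0 < c"
  shows "N \<longlonglongrightarrow> 0"
proof (rule tendsto_zero_if_decrement[of N "\<lambda>x. min (a * x\<^sup>2) (c * x)", OF assms(1,2)])
  show "mono_on {0..} (\<lambda>x. min (a * x\<^sup>2) (c * x))"
    using \<open>0 < a\<close> \<open>0 < c\<close> by (intro mono_onI min.mono mult_left_mono power_mono) auto
qed (use \<open>0 < a\<close> \<open>0 < c\<close> in auto)

lemma sum_conv_mut:
  "(\<Sum>v=1..vmax. conv_mut vmax P fmut v) = (\<Sum>u=1..vmax. P u * Fmut vmax fmut u)"
  unfolding conv_mut_def Fmut_def by (subst sum.swap) (simp add: sum_distrib_left)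

lemma sum_conv_mut_le:
  assumes "\<And>u. u \<in> {1..vmax} \<Longrightarrow> 0 \<le> P u"
    and "\<And>u. u \<in> {1..vmax} \<Longrightarrow> Fmut vmax fmut u \<le> F"
  shows "(\<Sum>v=1..vmax. conv_mut vmax P fmut v) \<le> F * l1norm vmax P"
  unfolding sum_conv_mut l1norm_def sum_distrib_left
  using assms by (intro sum_mono) (metis atLeastAtMost_iff mult.commute mult_left_mono)

lemma conv_mut_nonneg:
  assumes "\<And>u. u \<in> {1..vmax} \<Longrightarrow> 0 \<le> P u"
    and "\<And>u. u \<in> {-int vmax..int vmax} \<Longrightarrow> 0 \<le> fmut u"
    and "v \<in> {1..vmax}"
  shows "0 \<le> conv_mut vmax P fmut v"
  unfolding conv_mut_def using assms by (auto intro!: sum_nonneg)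

lemma pop_nonneg:
  assumes "K > 0" and "b \<ge> 0"
    and "\<And>v. v \<in> {1..vmax} \<Longrightarrow> fmort v \<le> 1"
    and "\<And>u. u \<in> {-int vmax..int vmax} \<Longrightarrow> 0 \<le> fmut u"
    and "\<And>v. v \<in> {1..vmax} \<Longrightarrow> 0 \<le> P0 v"
    and "v \<in> {1..vmax}"
  shows "0 \<le> pop vmax b K fmort fmut P0 n v"
  using assms(6)
proof (induction n arbitrary: v)
  case 0
  then show ?case using assms(5) by simp
next
  case (Suc n)
  let ?P = "pop vmax b K fmort fmut P0 n"
  have "0 \<le> (1 - l1norm vmax ?P / K) * indic_0K K (l1norm vmax ?P)"
    using \<open>K > 0\<close> by (simp add: indic_0K_def field_simps)
  moreover have "0 \<le> conv_mut vmax ?P fmut v"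
    using conv_mut_nonneg[OF Suc.IH assms(4) Suc.prems] .
  ultimately show ?case
    using Suc assms(2,3) by (simp add: mult.assoc)
qed

lemma l1norm_pop_Suc:
  "l1norm vmax (pop vmax b K fmort fmut P0 (Suc n)) =
     (\<Sum>v=1..vmax. (1 - fmort v) * pop vmax b K fmort fmut P0 n v)
     + b * (1 - l1norm vmax (pop vmax b K fmort fmut P0 n) / K)
         * indic_0K K (l1norm vmax (pop vmax b K fmort fmut P0 n))
         * (\<Sum>v=1..vmax. conv_mut vmax (pop vmax b K fmort fmut P0 n) fmut v)"
  unfolding pop.simps(2) l1norm_def[of vmax "\<lambda>v. _ v + _ v"] sum.distrib sum_distrib_left
  by (auto intro!: sum.cong simp: ac_simps)

lemma l1norm_pop_Suc_le:
  fixes vmax :: nat and b K m F :: real and fmort :: "nat \<Rightarrow> real" and fmut :: "int \<Rightarrow> real"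
    and P0 :: "nat \<Rightarrow> real"
  defines "N \<equiv> \<lambda>n. l1norm vmax (pop vmax b K fmort fmut P0 n)"
  assumes K_pos: "K > 0" and b_nonneg: "b \<ge> 0"
    and P_nonneg: "\<And>v. v \<in> {1..vmax} \<Longrightarrow> 0 \<le> pop vmax b K fmort fmut P0 n v"
    and m_ge: "\<And>v. v \<in> {1..vmax} \<Longrightarrow> 1 - fmort v \<le> m"
    and F_ge: "\<And>u. u \<in> {1..vmax} \<Longrightarrow> Fmut vmax fmut u \<le> F"
    and mF_le: "m + b * F \<le> 1"
  shows "N (Suc n) \<le> N n - min (b * F / K * (N n)\<^sup>2) ((1 - m) * N n)"
proof -
  let ?P = "pop vmax b K fmort fmut P0 n"
  let ?survivors = "\<Sum>v=1..vmax. (1 - fmort v) * ?P v"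
  let ?births = "\<Sum>v=1..vmax. conv_mut vmax ?P fmut v"
  have N_Suc: "N (Suc n) = ?survivors + b * (1 - N n / K) * indic_0K K (N n) * ?births"
    unfolding N_def by (rule l1norm_pop_Suc)
  have survivors: "?survivors \<le> m * N n"
    unfolding N_def l1norm_def sum_distrib_left using m_ge P_nonneg
    by (intro sum_mono mult_right_mono) auto
  have births: "?births \<le> F * N n"
    unfolding N_def using sum_conv_mut_le[OF P_nonneg F_ge] .
  have "0 \<le> N n"
    unfolding N_def l1norm_def using P_nonneg by (auto intro!: sum_nonneg)
  show ?thesis
  proof (cases "N n \<le> K")
    case True
    have "0 \<le> b * (1 - N n / K)"
      using True K_pos b_nonneg by (intro mult_nonneg_nonneg) (simp_all add: field_simps)
    then have "N (Suc n) \<le> m * N n + b * (1 - N n / K) * (F * N n)"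
      using N_Suc True \<open>0 \<le> N n\<close> survivors mult_left_mono[OF births]
      by (simp add: indic_0K_def add_mono)
    also have "\<dots> = (m + b * F) * N n - b * F / K * (N n)\<^sup>2"
      using K_pos by (simp add: field_simps power2_eq_square)
    also have "\<dots> \<le> N n - b * F / K * (N n)\<^sup>2"
      using mult_right_mono[OF mF_le \<open>0 \<le> N n\<close>] by simp
    finally show ?thesis
      by linarith
  next
    case False
    then have "N (Suc n) \<le> m * N n"
      using N_Suc survivors by (simp add: indic_0K_def)
    then show ?thesis
      by (simp add: algebra_simps)
  qed
qed

lemma symmetric_decreasing_le_at_0:
  fixes f :: "int \<Rightarrow> real"
  assumes sym: "\<And>u. u \<in> {-n..n} \<Longrightarrow> f (-u) = f u"
    and decr: "\<And>u w. 0 \<le> u \<Longrightarrow> u \<le> w \<Longrightarrow> w \<le> n \<Longrightarrow> f w \<le> f u"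
    and u: "u \<in> {-n..n}"
  shows "f u \<le> f 0"
proof (cases "0 \<le> u")
  case True
  then show ?thesis using decr[of 0 u] u by simp
next
  case False
  then show ?thesis using decr[of 0 "-u"] sym[OF u] u by simp
qed

lemma symmetric_decreasing_pos_at_0:
  fixes f :: "int \<Rightarrow> real"
  assumes "\<And>u. u \<in> {-n..n} \<Longrightarrow> f (-u) = f u"
    and "\<And>u w. 0 \<le> u \<Longrightarrow> u \<le> w \<Longrightarrow> w \<le> n \<Longrightarrow> f w \<le> f u"
    and sum_1: "(\<Sum>u=-n..n. f u) = 1"
  shows "0 < f 0"
proof (rule ccontr)
  assume "\<not> 0 < f 0"
  then have "f u \<le> 0" if "u \<in> {-n..n}" for u
    using symmetric_decreasing_le_at_0[of n f u, OF assms(1,2) that] by linarith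
  then have "(\<Sum>u=-n..n. f u) \<le> 0"
    by (intro sum_nonpos) simp
  with sum_1 show False by simp
qed

lemma Max_Fmut_pos:
  assumes "vmax \<ge> 1"
    and nonneg: "\<And>u. u \<in> {-int vmax..int vmax} \<Longrightarrow> 0 \<le> fmut u"
    and sym: "\<And>u. u \<in> {-int vmax..int vmax} \<Longrightarrow> fmut (-u) = fmut u"
    and decr: "\<And>u w. 0 \<le> u \<Longrightarrow> u \<le> w \<Longrightarrow> w \<le> int vmax \<Longrightarrow> fmut w \<le> fmut u"
    and sum_1: "(\<Sum>u=-int vmax..int vmax. fmut u) = 1"
  shows "0 < (MAX u\<in>{1..vmax}. Fmut vmax fmut u)"
proof -
  have "fmut (int 1 - int 1) \<le> Fmut vmax fmut 1"
    unfolding Fmut_def using \<open>vmax \<ge> 1\<close> nonneg by (intro member_le_sum) auto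
  also have "\<dots> \<le> (MAX u\<in>{1..vmax}. Fmut vmax fmut u)"
    using \<open>vmax \<ge> 1\<close> by (intro Max_ge) auto
  finally show ?thesis
    using symmetric_decreasing_pos_at_0[OF sym decr sum_1] by simp
qed

theorem theorem2p2:
  fixes vmax :: nat and b K :: real
    and fmort :: "nat \<Rightarrow> real" and fmut :: "int \<Rightarrow> real" and P0 :: "nat \<Rightarrow> real"
  assumes vmax_pos: "vmax \<ge> 1"
    and b_pos: "b > 0" and K_pos: "K > 0"
    and fmort_range: "\<And>v. v \<in> {1..vmax} \<Longrightarrow> 0 < fmort v \<and> fmort v < 1"
    and fmut_range: "\<And>u. u \<in> {-int vmax..int vmax} \<Longrightarrow> 0 \<le> fmut u \<and> fmut u \<le> 1"
    and fmut_sym: "\<And>u. u \<in> {-int vmax..int vmax} \<Longrightarrow> fmut (-u) = fmut u"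
    and fmut_decr: "\<And>u w. 0 \<le> u \<Longrightarrow> u \<le> w \<Longrightarrow> w \<le> int vmax \<Longrightarrow> fmut w \<le> fmut u"
    and fmut_sum: "(\<Sum>u=-int vmax..int vmax. fmut u) = 1"
    and P0_nonneg: "\<And>v. v \<in> {1..vmax} \<Longrightarrow> P0 v \<ge> 0"
    and cond: "(MAX v\<in>{1..vmax}. 1 - fmort v) + b * (MAX u\<in>{1..vmax}. Fmut vmax fmut u) \<le> 1"
  shows "(\<lambda>n. l1norm vmax (pop vmax b K fmort fmut P0 n)) \<longlonglongrightarrow> 0"
proof -
  define m where "m = (MAX v\<in>{1..vmax}. 1 - fmort v)"
  define F where "F = (MAX u\<in>{1..vmax}. Fmut vmax fmut u)"
  have "m \<in> (\<lambda>v. 1 - fmort v) ` {1..vmax}"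
    unfolding m_def using vmax_pos by (intro Max_in) auto
  then have "m < 1"
    using fmort_range by auto
  have "0 < F"
    unfolding F_def using Max_Fmut_pos[OF vmax_pos _ fmut_sym fmut_decr fmut_sum] fmut_range by blast
  have P_nonneg: "0 \<le> pop vmax b K fmort fmut P0 n v" if "v \<in> {1..vmax}" for n v
    by (rule pop_nonneg[OF K_pos _ _ _ P0_nonneg that])
      (use b_pos fmort_range fmut_range in \<open>auto simp: less_imp_le\<close>)
  show ?thesis
  proof (rule tendsto_zero_if_quadratic_or_linear_decrement)
    show "0 \<le> l1norm vmax (pop vmax b K fmort fmut P0 n)" for n
      unfolding l1norm_def using P_nonneg by (intro sum_nonneg) simp
    show "l1norm vmax (pop vmax b K fmort fmut P0 (Suc n))
      \<le> l1norm vmax (pop vmax b K fmort fmut P0 n)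
        - min (b * F / K * (l1norm vmax (pop vmax b K fmort fmut P0 n))\<^sup>2)
              ((1 - m) * l1norm vmax (pop vmax b K fmort fmut P0 n))" for n
      using l1norm_pop_Suc_le[OF K_pos _ P_nonneg, of m F] b_pos cond
      unfolding m_def F_def by (simp add: Max_ge)
  qed (use b_pos K_pos \<open>0 < F\<close> \<open>m < 1\<close> in auto)
qed

end
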